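(* Let $c_1,c_2\in\mathbb{R}$ with $c_1c_2=0$ and $c:=\max\{|c_1|,|c_2|\}\neq0$. Let $c_{2k-1}=c_1$, $c_{2k}=c_2$ for $k\in\mathbb{N}$, and let $J$ be the self-adjoint operator in $l^2(\mathbb{N})$ given by the (block-diagonal) matrix with diagonal entries $q_n=n$ and off-diagonal entries $\lambda_n=c_nn$, i.e. $(Ju)_1=u_1+c_1u_2$, $(Ju)_n=\lambda_{n-1}u_{n-1}+nu_n+\lambda_nu_{n+1}$ for $n\ge2$, on its natural domain $\{u\in l^2(\mathbb{N}):Ju\in l^2(\mathbb{N})\}$. Then $\sigma(J)$ is the closure of the set of eigenvalues of $J$, and this set of eigenvalues is $$\{\lambda_n^+,\lambda_n^-:\ n\in\mathbb{N}\}\ \text{ if } c_1\neq0,\ c_2=0,\qquad \{1\}\cup\{\tilde\lambda_n^+,\tilde\lambda_n^-:\ n\ge2\}\ \text{ if } c_1=0,\ c_2\neq0,$$ where $\lambda_n^{\pm}=\frac{4n-1\pm\sqrt{4c^2(2n-1)^2+1}}{2}$ and $\tilde\lambda_n^{\pm}=\frac{4n-3\pm\sqrt{4c^2(2n-2)^2+1}}{2}$, and as $n\to\infty$: $$\lambda_n^+,\ \tilde\lambda_n^+=2(1+c)n+O(1),$$ $$\lambda_n^-=2(1-c)n+\left(c-\tfrac12\right)-\frac1{16cn}+O\left(\tfrac1{n^2}\right),$$ $$\tilde\lambda_n^-=2(1-c)n+\left(2c-\tfrac32\right)-\frac1{16cn}+O\left(\tfrac1{n^2}\right).$$ *)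

theory Defs
  imports "HOL-Analysis.Analysis" "HOL-Library.Landau_Symbols"
begin

text \<open>Sequences in l^2(N), N = {1,2,...}, are represented as functions nat => complex
  that vanish at index 0 and are square summable. Index n >= 1 is the paper's index n.\<close>

definition ell2 :: "(nat \<Rightarrow> complex) set" where
  "ell2 = {u. u 0 = 0 \<and> summable (\<lambda>n. (cmod (u n))\<^sup>2)}"

definition l2norm :: "(nat \<Rightarrow> complex) \<Rightarrow> real" where
  "l2norm u = sqrt (\<Sum>n. (cmod (u n))\<^sup>2)"

definition cseq :: "real \<Rightarrow> real \<Rightarrow> nat \<Rightarrow> real" where
  "cseq c1 c2 n = (if odd n then c1 else c2)"

text \<open>Off-diagonal entries lambda_n = c_n n (lambda_0 = 0 by convention).\<close>
definition offdiag :: "real \<Rightarrow> real \<Rightarrow> nat \<Rightarrow> real" where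
  "offdiag c1 c2 n = cseq c1 c2 n * real n"

definition Jop :: "real \<Rightarrow> real \<Rightarrow> (nat \<Rightarrow> complex) \<Rightarrow> (nat \<Rightarrow> complex)" where
  "Jop c1 c2 u n = (if n = 0 then 0 else
      of_real (offdiag c1 c2 (n - 1)) * u (n - 1) + of_nat n * u n
      + of_real (offdiag c1 c2 n) * u (n + 1))"

definition domJ :: "real \<Rightarrow> real \<Rightarrow> (nat \<Rightarrow> complex) set" where
  "domJ c1 c2 = {u \<in> ell2. Jop c1 c2 u \<in> ell2}"

definition eigenvalues_J :: "real \<Rightarrow> real \<Rightarrow> complex set" where
  "eigenvalues_J c1 c2 = {z. \<exists>u \<in> domJ c1 c2. u \<noteq> (\<lambda>_. 0) \<and> Jop c1 c2 u = (\<lambda>n. z * u n)}"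

definition resolvent_set_J :: "real \<Rightarrow> real \<Rightarrow> complex set" where
  "resolvent_set_J c1 c2 = {z.
     bij_betw (\<lambda>u n. Jop c1 c2 u n - z * u n) (domJ c1 c2) ell2 \<and>
     (\<exists>C. \<forall>u \<in> domJ c1 c2. l2norm u \<le> C * l2norm (\<lambda>n. Jop c1 c2 u n - z * u n))}"

definition spectrum_J :: "real \<Rightarrow> real \<Rightarrow> complex set" where
  "spectrum_J c1 c2 = UNIV - resolvent_set_J c1 c2"

definition lam_plus :: "real \<Rightarrow> nat \<Rightarrow> real" where
  "lam_plus c n = (4 * real n - 1 + sqrt (4 * c\<^sup>2 * (2 * real n - 1)\<^sup>2 + 1)) / 2"
definition lam_minus :: "real \<Rightarrow> nat \<Rightarrow> real" where
  "lam_minus c n = (4 * real n - 1 - sqrt (4 * c\<^sup>2 * (2 * real n - 1)\<^sup>2 + 1)) / 2"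
definition tlam_plus :: "real \<Rightarrow> nat \<Rightarrow> real" where
  "tlam_plus c n = (4 * real n - 3 + sqrt (4 * c\<^sup>2 * (2 * real n - 2)\<^sup>2 + 1)) / 2"
definition tlam_minus :: "real \<Rightarrow> nat \<Rightarrow> real" where
  "tlam_minus c n = (4 * real n - 3 - sqrt (4 * c\<^sup>2 * (2 * real n - 2)\<^sup>2 + 1)) / 2"

end

theory Submission
  imports Defs
begin

text \<open>For \<open>c1 c2 = 0\<close> every second off-diagonal entry of \<open>J\<close> vanishes, so \<open>J\<close> is the
  orthogonal sum of real symmetric 2\<times>2 blocks \<open>B = [[p, r], [r, q]]\<close> (preceded by the
  1\<times>1 block \<open>(1)\<close> when \<open>c1 = 0\<close>). Hence the eigenvalues of \<open>J\<close> are those of the blocks,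
  \<open>(p + q \<plusminus> \<surd>((p - q)\<^sup>2 + 4 r\<^sup>2)) / 2\<close>, which are the numbers \<open>lam_plus\<close>, \<open>lam_minus\<close>
  (resp. \<open>tlam_plus\<close>, \<open>tlam_minus\<close>). If \<open>z\<close> has distance \<open>d > 0\<close> from all eigenvalues, then
  \<open>|(B - z) x| \<ge> d |x|\<close> on every block because \<open>B\<close> is real symmetric, so \<open>J - z\<close> is inverted
  block by block with inverse bounded by \<open>1/d\<close>; conversely, an eigenvector for \<open>\<mu>\<close> forces
  \<open>\<parallel>(J - z)\<^sup>-\<^sup>1\<parallel> \<ge> 1/|\<mu> - z|\<close>. So the spectrum is the closure of the set of eigenvalues.
  The asymptotics come from \<open>\<surd>(X\<^sup>2 + 1) = X + 1/(2X) + O(X\<^sup>-\<^sup>3)\<close>.\<close>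

section \<open>Real symmetric 2\<times>2 blocks\<close>

definition sym_eig_plus :: "real \<Rightarrow> real \<Rightarrow> real \<Rightarrow> real" where
  "sym_eig_plus p q r = (p + q + sqrt ((p - q)\<^sup>2 + 4 * r\<^sup>2)) / 2"

definition sym_eig_minus :: "real \<Rightarrow> real \<Rightarrow> real \<Rightarrow> real" where
  "sym_eig_minus p q r = (p + q - sqrt ((p - q)\<^sup>2 + 4 * r\<^sup>2)) / 2"

lemma sym_eig_sum: "sym_eig_plus p q r + sym_eig_minus p q r = p + q"
  unfolding sym_eig_plus_def sym_eig_minus_def by (simp add: field_simps)

lemma sym_eig_prod: "sym_eig_plus p q r * sym_eig_minus p q r = p * q - r\<^sup>2"
proof -
  have "sym_eig_plus p q r * sym_eig_minus p q r = ((p + q)\<^sup>2 - (sqrt ((p - q)\<^sup>2 + 4 * r\<^sup>2))\<^sup>2) / 4"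
    unfolding sym_eig_plus_def sym_eig_minus_def by (simp add: power2_eq_square algebra_simps)
  also have "(sqrt ((p - q)\<^sup>2 + 4 * r\<^sup>2))\<^sup>2 = (p - q)\<^sup>2 + 4 * r\<^sup>2" by simp
  also have "((p + q)\<^sup>2 - ((p - q)\<^sup>2 + 4 * r\<^sup>2)) / 4 = p * q - r\<^sup>2"
    by (simp add: power2_eq_square field_simps)
  finally show ?thesis .
qed

lemma sym_eig_char_poly:
  fixes z :: complex
  shows "(of_real p - z) * (of_real q - z) - (of_real r)\<^sup>2
     = (of_real (sym_eig_plus p q r) - z) * (of_real (sym_eig_minus p q r) - z)"
proof -
  have sum: "complex_of_real (sym_eig_plus p q r) + of_real (sym_eig_minus p q r) = of_real p + of_real q"
    and prod: "complex_of_real (sym_eig_plus p q r) * of_real (sym_eig_minus p q r) = of_real p * of_real q - (of_real r)\<^sup>2"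
    by (simp_all flip: of_real_add of_real_mult of_real_diff of_real_power add: sym_eig_sum sym_eig_prod)
  have "(of_real (sym_eig_plus p q r) - z) * (of_real (sym_eig_minus p q r) - z)
      = of_real (sym_eig_plus p q r) * of_real (sym_eig_minus p q r) - z * (of_real (sym_eig_plus p q r) + of_real (sym_eig_minus p q r)) + z * z"
    by (simp add: algebra_simps)
  then show ?thesis unfolding sum prod by (simp add: algebra_simps)
qed

lemma sym_eig_char_poly_eq_0_iff:
  fixes z :: complex
  shows "(of_real p - z) * (of_real q - z) - (of_real r)\<^sup>2 = 0
     \<longleftrightarrow> z = of_real (sym_eig_plus p q r) \<or> z = of_real (sym_eig_minus p q r)"
  unfolding sym_eig_char_poly by auto

lemma sym2_kernel_iff:
  fixes a b c :: "'a :: field"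
  shows "(\<exists>x1 x2. (x1 \<noteq> 0 \<or> x2 \<noteq> 0) \<and> a * x1 + b * x2 = 0 \<and> b * x1 + c * x2 = 0) \<longleftrightarrow> a * c - b\<^sup>2 = 0"
proof
  assume "\<exists>x1 x2. (x1 \<noteq> 0 \<or> x2 \<noteq> 0) \<and> a * x1 + b * x2 = 0 \<and> b * x1 + c * x2 = 0"
  then obtain x1 x2 where nz: "x1 \<noteq> 0 \<or> x2 \<noteq> 0" and eq: "a * x1 + b * x2 = 0" "b * x1 + c * x2 = 0"
    by blast
  have "(a * c - b\<^sup>2) * x1 = c * (a * x1 + b * x2) - b * (b * x1 + c * x2)"
    and "(a * c - b\<^sup>2) * x2 = a * (b * x1 + c * x2) - b * (a * x1 + b * x2)"
    by (simp_all add: power2_eq_square algebra_simps)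
  then show "a * c - b\<^sup>2 = 0" using nz eq by auto
next
  assume det: "a * c - b\<^sup>2 = 0"
  show "\<exists>x1 x2. (x1 \<noteq> 0 \<or> x2 \<noteq> 0) \<and> a * x1 + b * x2 = 0 \<and> b * x1 + c * x2 = 0"
  proof (cases "a = 0 \<and> b = 0")
    case True
    then show ?thesis by (intro exI[of _ 1] exI[of _ 0]) simp
  next
    case False
    then show ?thesis using det
      by (intro exI[of _ b] exI[of _ "- a"]) (auto simp: power2_eq_square algebra_simps)
  qed
qed

lemma sym2_solvable:
  fixes a b c :: "'a :: field"
  assumes "a * c - b\<^sup>2 \<noteq> 0"
  shows "\<exists>x1 x2. a * x1 + b * x2 = g1 \<and> b * x1 + c * x2 = g2"
proof -
  define D where "D = a * c - b\<^sup>2"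
  have "D \<noteq> 0" using assms by (simp add: D_def)
  have "a * ((c * g1 - b * g2) / D) + b * ((a * g2 - b * g1) / D) = g1"
    and "b * ((c * g1 - b * g2) / D) + c * ((a * g2 - b * g1) / D) = g2"
    using \<open>D \<noteq> 0\<close> by (simp_all add: field_simps) (simp_all add: D_def power2_eq_square algebra_simps)
  then show ?thesis by blast
qed

lemma quadratic_form_nonneg:
  fixes m11 m12 m22 y1 y2 :: real
  assumes trace: "0 \<le> m11 + m22" and det: "0 \<le> m11 * m22 - m12\<^sup>2"
  shows "0 \<le> m11 * y1\<^sup>2 + 2 * m12 * y1 * y2 + m22 * y2\<^sup>2"
proof (cases "m11 > 0")
  case True
  have "m11 * (m11 * y1\<^sup>2 + 2 * m12 * y1 * y2 + m22 * y2\<^sup>2) = (m11 * y1 + m12 * y2)\<^sup>2 + (m11 * m22 - m12\<^sup>2) * y2\<^sup>2"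
    by (simp add: power2_eq_square algebra_simps)
  also have "\<dots> \<ge> 0" using det by simp
  finally show ?thesis using True by (simp add: zero_le_mult_iff)
next
  case False
  have "0 \<le> m11 * m22" using det zero_le_power2[of m12] by linarith
  then have "m11 = 0" "0 \<le> m22" using False trace by (auto simp: zero_le_mult_iff)
  then show ?thesis using det by simp
qed

text \<open>The eigenvalues \<open>w1, w2\<close> of \<open>A = [[P, r], [r, Q]]\<close> enter only through their sum and product;
  \<open>A\<^sup>2 - e\<close> has trace \<open>w1\<^sup>2 + w2\<^sup>2 - 2e\<close> and determinant \<open>(w1\<^sup>2 - e)(w2\<^sup>2 - e)\<close>.\<close>

lemma sym2_real_lower_bound:
  fixes P Q r e y1 y2 w1 w2 :: real
  assumes sum: "w1 + w2 = P + Q" and prod: "w1 * w2 = P * Q - r\<^sup>2"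
    and "e \<le> w1\<^sup>2" and "e \<le> w2\<^sup>2"
  shows "e * (y1\<^sup>2 + y2\<^sup>2) \<le> (P * y1 + r * y2)\<^sup>2 + (r * y1 + Q * y2)\<^sup>2"
proof -
  define m11 where "m11 = P\<^sup>2 + r\<^sup>2 - e"
  define m22 where "m22 = Q\<^sup>2 + r\<^sup>2 - e"
  define m12 where "m12 = r * (P + Q)"
  have squares: "P\<^sup>2 + Q\<^sup>2 + 2 * r\<^sup>2 = w1\<^sup>2 + w2\<^sup>2"
  proof -
    have "w1\<^sup>2 + w2\<^sup>2 = (w1 + w2)\<^sup>2 - 2 * (w1 * w2)" by (simp add: power2_eq_square algebra_simps)
    then show ?thesis unfolding sum prod by (simp add: power2_eq_square algebra_simps)
  qed
  have "m11 * m22 - m12\<^sup>2 = (P * Q - r\<^sup>2)\<^sup>2 - e * (P\<^sup>2 + Q\<^sup>2 + 2 * r\<^sup>2) + e\<^sup>2"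
    unfolding m11_def m12_def m22_def by (simp add: power2_eq_square algebra_simps)
  also have "\<dots> = (w1\<^sup>2 - e) * (w2\<^sup>2 - e)"
    unfolding squares prod[symmetric] by (simp add: power2_eq_square algebra_simps)
  finally have "0 \<le> m11 * m22 - m12\<^sup>2" using assms(3,4) by simp
  moreover have "0 \<le> m11 + m22" unfolding m11_def m22_def using squares assms(3,4) by linarith
  ultimately have "0 \<le> m11 * y1\<^sup>2 + 2 * m12 * y1 * y2 + m22 * y2\<^sup>2" by (intro quadratic_form_nonneg)
  then show ?thesis unfolding m11_def m12_def m22_def by (simp add: power2_eq_square algebra_simps)
qed

text \<open>Since \<open>A - Re z\<close> is real, \<open>|(A - z) x|\<^sup>2\<close> splits into the real and imaginary parts of \<open>x\<close>
  plus \<open>(Im z)\<^sup>2 |x|\<^sup>2\<close>.\<close>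

lemma sym2_apply_norm_split:
  fixes p q r :: real and z x1 x2 :: complex
  shows "(cmod ((of_real p - z) * x1 + of_real r * x2))\<^sup>2 + (cmod (of_real r * x1 + (of_real q - z) * x2))\<^sup>2
    = ((p - Re z) * Re x1 + r * Re x2)\<^sup>2 + (r * Re x1 + (q - Re z) * Re x2)\<^sup>2
      + (((p - Re z) * Im x1 + r * Im x2)\<^sup>2 + (r * Im x1 + (q - Re z) * Im x2)\<^sup>2)
      + (Im z)\<^sup>2 * ((cmod x1)\<^sup>2 + (cmod x2)\<^sup>2)"
  unfolding cmod_power2 by (simp add: power2_eq_square algebra_simps)

lemma sym2_lower_bound:
  fixes p q r d :: real and z x1 x2 :: complex
  assumes "0 \<le> d"
    and "d \<le> cmod (of_real (sym_eig_plus p q r) - z)" and "d \<le> cmod (of_real (sym_eig_minus p q r) - z)"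
  shows "d\<^sup>2 * ((cmod x1)\<^sup>2 + (cmod x2)\<^sup>2)
    \<le> (cmod ((of_real p - z) * x1 + of_real r * x2))\<^sup>2 + (cmod (of_real r * x1 + (of_real q - z) * x2))\<^sup>2"
proof -
  define a where "a = Re z"
  define e where "e = d\<^sup>2 - (Im z)\<^sup>2"
  have apart: "e \<le> (w - a)\<^sup>2" if "d \<le> cmod (of_real w - z)" for w
  proof -
    have "d\<^sup>2 \<le> (cmod (of_real w - z))\<^sup>2" using that \<open>0 \<le> d\<close> by (simp add: power_mono)
    then show ?thesis unfolding e_def a_def cmod_power2 by simp
  qed
  have sum: "(sym_eig_plus p q r - a) + (sym_eig_minus p q r - a) = (p - a) + (q - a)"
    using sym_eig_sum[of p q r] by simp
  have "(sym_eig_plus p q r - a) * (sym_eig_minus p q r - a)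
      = sym_eig_plus p q r * sym_eig_minus p q r - a * (sym_eig_plus p q r + sym_eig_minus p q r) + a\<^sup>2"
    by (simp add: power2_eq_square algebra_simps)
  then have prod: "(sym_eig_plus p q r - a) * (sym_eig_minus p q r - a) = (p - a) * (q - a) - r\<^sup>2"
    unfolding sym_eig_sum sym_eig_prod by (simp add: power2_eq_square algebra_simps)
  note real_bound = sym2_real_lower_bound[OF sum prod apart[OF assms(2)] apart[OF assms(3)]]
  have "d\<^sup>2 * ((cmod x1)\<^sup>2 + (cmod x2)\<^sup>2)
      = e * ((Re x1)\<^sup>2 + (Re x2)\<^sup>2) + e * ((Im x1)\<^sup>2 + (Im x2)\<^sup>2) + (Im z)\<^sup>2 * ((cmod x1)\<^sup>2 + (cmod x2)\<^sup>2)"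
    unfolding e_def cmod_power2 by (simp add: algebra_simps)
  also have "\<dots> \<le> (cmod ((of_real p - z) * x1 + of_real r * x2))\<^sup>2 + (cmod (of_real r * x1 + (of_real q - z) * x2))\<^sup>2"
    unfolding sym2_apply_norm_split a_def[symmetric]
    using real_bound[of "Re x1" "Re x2"] real_bound[of "Im x1" "Im x2"] by linarith
  finally show ?thesis .
qed

section \<open>Square summable sequences\<close>

lemma ell2_add_scaled:
  assumes u: "u \<in> ell2" and v: "v \<in> ell2"
  shows "(\<lambda>n. u n + w * v n) \<in> ell2"
proof -
  have su: "summable (\<lambda>n. (cmod (u n))\<^sup>2)" and sv: "summable (\<lambda>n. (cmod (v n))\<^sup>2)"
    using u v by (auto simp: ell2_def)
  have bound: "(cmod (u n + w * v n))\<^sup>2 \<le> 2 * (cmod (u n))\<^sup>2 + 2 * (cmod w)\<^sup>2 * (cmod (v n))\<^sup>2" for n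
  proof -
    have "(cmod (u n + w * v n))\<^sup>2 \<le> (cmod (u n) + cmod w * cmod (v n))\<^sup>2"
      by (rule power_mono) (auto intro: order.trans[OF norm_triangle_ineq] simp: norm_mult)
    also have "\<dots> \<le> 2 * (cmod (u n))\<^sup>2 + 2 * (cmod w)\<^sup>2 * (cmod (v n))\<^sup>2"
      using sum_squares_ge_zero[of "cmod (u n) - cmod w * cmod (v n)" 0]
      by (simp add: power2_eq_square algebra_simps)
    finally show ?thesis .
  qed
  have "summable (\<lambda>n. 2 * (cmod (u n))\<^sup>2 + 2 * (cmod w)\<^sup>2 * (cmod (v n))\<^sup>2)"
    using su sv by (intro summable_add summable_mult)
  then have "summable (\<lambda>n. (cmod (u n + w * v n))\<^sup>2)"
    by (rule summable_comparison_test'[where N = 0]) (simp add: bound)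
  then show ?thesis using u v by (simp add: ell2_def)
qed

lemma ell2_scaled: "u \<in> ell2 \<Longrightarrow> (\<lambda>n. w * u n) \<in> ell2"
  using ell2_add_scaled[of "\<lambda>_. 0" u w] by (simp add: ell2_def)

lemma l2norm_scaled:
  assumes "u \<in> ell2" shows "l2norm (\<lambda>n. w * u n) = cmod w * l2norm u"
proof -
  have "(\<Sum>n. (cmod (w * u n))\<^sup>2) = (cmod w)\<^sup>2 * (\<Sum>n. (cmod (u n))\<^sup>2)"
    using assms by (simp add: norm_mult power_mult_distrib suminf_mult ell2_def)
  then show ?thesis unfolding l2norm_def by (simp add: real_sqrt_mult)
qed

lemma l2norm_nonneg: "u \<in> ell2 \<Longrightarrow> 0 \<le> l2norm u"
  unfolding l2norm_def ell2_def by (auto intro: suminf_nonneg)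

lemma l2norm_pos:
  assumes "u \<in> ell2" and "u \<noteq> (\<lambda>_. 0)" shows "0 < l2norm u"
proof -
  obtain n where "u n \<noteq> 0" using assms(2) by auto
  then have "0 < (\<Sum>n. (cmod (u n))\<^sup>2)"
    using assms(1) by (subst suminf_pos_iff) (auto simp: ell2_def)
  then show ?thesis unfolding l2norm_def by simp
qed

lemma sum_lessThan_double: "sum a {..<2 * n} = (\<Sum>m<n. a (2 * m) + a (2 * m + 1))"
  for a :: "nat \<Rightarrow> 'a :: comm_monoid_add"
  by (induction n) (simp_all add: lessThan_Suc add_ac)

lemma summable_le_by_pairs:
  fixes a b :: "nat \<Rightarrow> real"
  assumes K: "0 < K" and a: "\<And>n. 0 \<le> a n" and b: "\<And>n. 0 \<le> b n" "summable b"
    and pairs: "\<And>m. K * (a (2 * m) + a (2 * m + 1)) \<le> b (2 * m) + b (2 * m + 1)"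
  shows "summable a \<and> K * suminf a \<le> suminf b"
proof -
  have partial: "sum a {..<n} \<le> suminf b / K" for n
  proof -
    have "sum a {..<n} \<le> sum a {..<2 * n}" by (rule sum_mono2) (use a in auto)
    also have "\<dots> \<le> (\<Sum>m<n. (b (2 * m) + b (2 * m + 1)) / K)"
      unfolding sum_lessThan_double using pairs K by (intro sum_mono) (simp add: field_simps)
    also have "\<dots> = sum b {..<2 * n} / K" by (simp add: sum_lessThan_double sum_divide_distrib)
    also have "\<dots> \<le> suminf b / K" using K b by (intro divide_right_mono sum_le_suminf) auto
    finally show ?thesis .
  qed
  have "summable a" using a partial by (rule summableI_nonneg_bounded)
  moreover have "suminf a \<le> suminf b / K" using \<open>summable a\<close> partial by (rule suminf_le_const)
  ultimately show ?thesis using K by (simp add: field_simps)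
qed

lemma summable_le_by_pairs_from:
  fixes a b :: "nat \<Rightarrow> real"
  assumes K: "0 < K" and a: "\<And>n. 0 \<le> a n" and b: "\<And>n. 0 \<le> b n" "summable b"
    and initial: "\<And>n. n < s \<Longrightarrow> a n = 0"
    and pairs: "\<And>m. K * (a (2 * m + s) + a (2 * m + s + 1)) \<le> b (2 * m + s) + b (2 * m + s + 1)"
  shows "summable a \<and> K * suminf a \<le> suminf b"
proof -
  have shifted: "summable (\<lambda>n. a (n + s)) \<and> K * (\<Sum>n. a (n + s)) \<le> (\<Sum>n. b (n + s))"
    by (rule summable_le_by_pairs) (use K a b pairs in \<open>simp_all add: add_ac\<close>)
  then have "summable a" by simp
  have "suminf a = (\<Sum>n. a (n + s))"
    using suminf_split_initial_segment[OF \<open>summable a\<close>, of s] initial by simp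
  moreover have "(\<Sum>n. b (n + s)) \<le> suminf b"
    using suminf_split_initial_segment[OF b(2), of s] b(1) by (simp add: sum_nonneg)
  ultimately show ?thesis using shifted \<open>summable a\<close> by simp
qed

section \<open>Resolvent set and eigenvalues\<close>

definition Jop_minus :: "real \<Rightarrow> real \<Rightarrow> complex \<Rightarrow> (nat \<Rightarrow> complex) \<Rightarrow> nat \<Rightarrow> complex" where
  "Jop_minus c1 c2 z u n = Jop c1 c2 u n - z * u n"

lemma resolvent_set_J_iff:
  "z \<in> resolvent_set_J c1 c2 \<longleftrightarrow> bij_betw (Jop_minus c1 c2 z) (domJ c1 c2) ell2 \<and>
     (\<exists>C. \<forall>u \<in> domJ c1 c2. l2norm u \<le> C * l2norm (Jop_minus c1 c2 z u))"
  unfolding resolvent_set_J_def Jop_minus_def[abs_def] by simp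

lemma Jop_at_0 [simp]: "Jop c1 c2 u 0 = 0"
  by (simp add: Jop_def)

lemma Jop_diff: "Jop c1 c2 (\<lambda>n. u n - v n) = (\<lambda>n. Jop c1 c2 u n - Jop c1 c2 v n)"
  by (simp add: Jop_def algebra_simps fun_eq_iff)

lemma Jop_minus_diff: "Jop_minus c1 c2 z (\<lambda>n. u n - v n) = (\<lambda>n. Jop_minus c1 c2 z u n - Jop_minus c1 c2 z v n)"
  by (simp add: Jop_minus_def Jop_diff algebra_simps fun_eq_iff)

lemma Jop_minus_in_ell2: "u \<in> domJ c1 c2 \<Longrightarrow> Jop_minus c1 c2 z u \<in> ell2"
  using ell2_add_scaled[of "Jop c1 c2 u" u "- z"] by (simp add: domJ_def Jop_minus_def[abs_def])

lemma resolvent_set_J_apart_from_eigenvalues: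
  assumes "z \<in> resolvent_set_J c1 c2"
  shows "\<exists>d>0. \<forall>\<mu> \<in> eigenvalues_J c1 c2. d \<le> cmod (\<mu> - z)"
proof -
  obtain C where C: "\<And>u. u \<in> domJ c1 c2 \<Longrightarrow> l2norm u \<le> C * l2norm (Jop_minus c1 c2 z u)"
    using assms unfolding resolvent_set_J_iff by blast
  have "1 / (\<bar>C\<bar> + 1) \<le> cmod (\<mu> - z)" if \<mu>: "\<mu> \<in> eigenvalues_J c1 c2" for \<mu>
  proof -
    obtain u where u: "u \<in> domJ c1 c2" "u \<noteq> (\<lambda>_. 0)" "Jop c1 c2 u = (\<lambda>n. \<mu> * u n)"
      using \<mu> unfolding eigenvalues_J_def by blast
    have "u \<in> ell2" using u(1) by (simp add: domJ_def)
    have "Jop_minus c1 c2 z u = (\<lambda>n. (\<mu> - z) * u n)"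
      using u(3) by (simp add: Jop_minus_def[abs_def] algebra_simps)
    then have "l2norm u \<le> C * (cmod (\<mu> - z) * l2norm u)"
      using C[OF u(1)] l2norm_scaled[OF \<open>u \<in> ell2\<close>] by simp
    also have "\<dots> \<le> \<bar>C\<bar> * (cmod (\<mu> - z) * l2norm u)"
      by (rule mult_right_mono) (use l2norm_nonneg[OF \<open>u \<in> ell2\<close>] in auto)
    finally have "l2norm u * 1 \<le> l2norm u * (\<bar>C\<bar> * cmod (\<mu> - z))" by (simp add: algebra_simps)
    then have "1 \<le> \<bar>C\<bar> * cmod (\<mu> - z)"
      using l2norm_pos[OF \<open>u \<in> ell2\<close> u(2)] by (simp only: mult_le_cancel_left_pos)
    moreover have "cmod (\<mu> - z) * (\<bar>C\<bar> + 1) = \<bar>C\<bar> * cmod (\<mu> - z) + cmod (\<mu> - z)"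
      by (simp add: algebra_simps)
    ultimately have "1 \<le> cmod (\<mu> - z) * (\<bar>C\<bar> + 1)" using norm_ge_zero[of "\<mu> - z"] by linarith
    then show ?thesis by (simp add: pos_divide_le_eq)
  qed
  then show ?thesis by (intro exI[of _ "1 / (\<bar>C\<bar> + 1)"]) auto
qed

section \<open>Block diagonal Jacobi matrices\<close>

text \<open>For \<open>s = 0\<close> the first block meets the junk index \<open>0\<close>, where
  every vector of \<open>\<ell>\<^sup>2\<close> vanishes, so that block only contributes the eigenvalue \<open>q 0\<close>.\<close>

locale block_diagonal_J =
  fixes c1 c2 :: real and s :: nat and p q r :: "nat \<Rightarrow> real"
  assumes offset_le_1: "s \<le> 1"
    and Jop_block_fst: "\<And>u m. Jop c1 c2 u (2 * m + s) = of_real (p m) * u (2 * m + s) + of_real (r m) * u (2 * m + s + 1)"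
    and Jop_block_snd: "\<And>u m. Jop c1 c2 u (2 * m + s + 1) = of_real (r m) * u (2 * m + s) + of_real (q m) * u (2 * m + s + 1)"
begin

lemma less_offset_iff: "n < s \<longleftrightarrow> n = 0 \<and> s = 1"
  using offset_le_1 by auto

lemma eq_if_blockwise_eq:
  assumes "u 0 = v 0" and "\<And>m. u (2 * m + s) = v (2 * m + s) \<and> u (2 * m + s + 1) = v (2 * m + s + 1)"
  shows "u = v"
proof
  fix n
  show "u n = v n"
  proof (cases "n < s")
    case True
    then show ?thesis using assms(1) by (simp add: less_offset_iff)
  next
    case False
    then have "\<exists>m. n = 2 * m + s \<or> n = 2 * m + s + 1" by presburger
    then show ?thesis using assms(2) by auto
  qed
qed

lemma coupling_at_origin: "s = 0 \<Longrightarrow> r 0 = 0"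
  using Jop_block_fst[of "\<lambda>n. if n = 1 then 1 else 0" 0] by simp

lemma Jop_minus_block_fst:
  "Jop_minus c1 c2 z u (2 * m + s) = (of_real (p m) - z) * u (2 * m + s) + of_real (r m) * u (2 * m + s + 1)"
  unfolding Jop_minus_def Jop_block_fst by (simp add: algebra_simps)

lemma Jop_minus_block_snd:
  "Jop_minus c1 c2 z u (2 * m + s + 1) = of_real (r m) * u (2 * m + s) + (of_real (q m) - z) * u (2 * m + s + 1)"
  unfolding Jop_minus_def Jop_block_snd by (simp add: algebra_simps)

abbreviation block_kernel :: "complex \<Rightarrow> nat \<Rightarrow> complex \<Rightarrow> complex \<Rightarrow> bool" where
  "block_kernel z m x1 x2 \<equiv> (2 * m + s = 0 \<longrightarrow> x1 = 0) \<and> (x1 \<noteq> 0 \<or> x2 \<noteq> 0) \<and>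
     (of_real (p m) - z) * x1 + of_real (r m) * x2 = 0 \<and> of_real (r m) * x1 + (of_real (q m) - z) * x2 = 0"

lemma eigenvalue_block_kernel:
  assumes "z \<in> eigenvalues_J c1 c2"
  shows "\<exists>m x1 x2. block_kernel z m x1 x2"
proof -
  obtain u where u: "u \<in> domJ c1 c2" "u \<noteq> (\<lambda>_. 0)" "Jop c1 c2 u = (\<lambda>n. z * u n)"
    using assms unfolding eigenvalues_J_def by blast
  have "u 0 = 0" using u(1) by (simp add: domJ_def ell2_def)
  then obtain m where m: "u (2 * m + s) \<noteq> 0 \<or> u (2 * m + s + 1) \<noteq> 0"
    using eq_if_blockwise_eq[of u "\<lambda>_. 0"] u(2) by auto
  have "Jop_minus c1 c2 z u (2 * m + s) = 0" and "Jop_minus c1 c2 z u (2 * m + s + 1) = 0"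
    using u(3) by (simp_all add: Jop_minus_def)
  then have "(of_real (p m) - z) * u (2 * m + s) + of_real (r m) * u (2 * m + s + 1) = 0"
    and "of_real (r m) * u (2 * m + s) + (of_real (q m) - z) * u (2 * m + s + 1) = 0"
    unfolding Jop_minus_block_fst Jop_minus_block_snd .
  moreover have "2 * m + s = 0 \<longrightarrow> u (2 * m + s) = 0" using \<open>u 0 = 0\<close> by simp
  ultimately have "block_kernel z m (u (2 * m + s)) (u (2 * m + s + 1))" using m by (intro conjI)
  then show ?thesis by (intro exI)
qed

lemma block_kernel_eigenvalue:
  assumes "block_kernel z m x1 x2"
  shows "z \<in> eigenvalues_J c1 c2"
proof -
  define u where "u n = (if n = 2 * m + s then x1 else if n = 2 * m + s + 1 then x2 else 0)" for n
  have "u 0 = 0" using assms by (auto simp: u_def)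
  have "summable (\<lambda>n. (cmod (u n))\<^sup>2)"
    by (rule summable_finite[of "{2 * m + s, 2 * m + s + 1}"]) (auto simp: u_def)
  then have "u \<in> ell2" using \<open>u 0 = 0\<close> by (simp add: ell2_def)
  have u_block: "u (2 * m + s) = x1" "u (2 * m + s + 1) = x2" by (simp_all add: u_def)
  then have "u \<noteq> (\<lambda>_. 0)" using assms by auto
  have "Jop_minus c1 c2 z u = (\<lambda>_. 0)"
  proof (rule eq_if_blockwise_eq)
    fix m'
    show "Jop_minus c1 c2 z u (2 * m' + s) = 0 \<and> Jop_minus c1 c2 z u (2 * m' + s + 1) = 0"
      unfolding Jop_minus_block_fst Jop_minus_block_snd
      using assms by (cases "m' = m") (auto simp: u_def)
  qed (simp add: Jop_minus_def \<open>u 0 = 0\<close>)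
  then have J: "Jop c1 c2 u = (\<lambda>n. z * u n)" by (simp add: Jop_minus_def fun_eq_iff)
  then have "u \<in> domJ c1 c2" using \<open>u \<in> ell2\<close> ell2_scaled by (simp add: domJ_def)
  then show ?thesis using \<open>u \<noteq> (\<lambda>_. 0)\<close> J by (auto simp: eigenvalues_J_def)
qed

lemma eigenvalues_J_iff_block_kernel:
  "z \<in> eigenvalues_J c1 c2 \<longleftrightarrow> (\<exists>m x1 x2. block_kernel z m x1 x2)"
proof
  assume "\<exists>m x1 x2. block_kernel z m x1 x2"
  then show "z \<in> eigenvalues_J c1 c2" by (elim exE) (rule block_kernel_eigenvalue)
qed (rule eigenvalue_block_kernel)

lemma block_kernel_iff:
  "(\<exists>x1 x2. block_kernel z m x1 x2) \<longleftrightarrow>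
     (if 2 * m + s = 0 then z = of_real (q 0)
      else z = of_real (sym_eig_plus (p m) (q m) (r m)) \<or> z = of_real (sym_eig_minus (p m) (q m) (r m)))"
proof (cases "2 * m + s = 0")
  case True
  then show ?thesis using coupling_at_origin by auto
next
  case False
  then have "(\<exists>x1 x2. block_kernel z m x1 x2) \<longleftrightarrow> (\<exists>x1 x2. (x1 \<noteq> 0 \<or> x2 \<noteq> 0) \<and>
      (of_real (p m) - z) * x1 + of_real (r m) * x2 = 0 \<and> of_real (r m) * x1 + (of_real (q m) - z) * x2 = 0)"
    by (simp only: simp_thms)
  also have "\<dots> \<longleftrightarrow> (of_real (p m) - z) * (of_real (q m) - z) - (of_real (r m))\<^sup>2 = 0"
    by (rule sym2_kernel_iff)
  finally show ?thesis using False by (simp only: sym_eig_char_poly_eq_0_iff if_False)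
qed

lemma eigenvalues_J_iff:
  "z \<in> eigenvalues_J c1 c2 \<longleftrightarrow> (s = 0 \<and> z = of_real (q 0)) \<or>
     (\<exists>m. 2 * m + s \<noteq> 0 \<and> (z = of_real (sym_eig_plus (p m) (q m) (r m)) \<or> z = of_real (sym_eig_minus (p m) (q m) (r m))))"
  (is "_ \<longleftrightarrow> ?blocks")
proof
  assume "z \<in> eigenvalues_J c1 c2"
  then obtain m where "\<exists>x1 x2. block_kernel z m x1 x2" unfolding eigenvalues_J_iff_block_kernel ..
  then show ?blocks unfolding block_kernel_iff by (cases "2 * m + s = 0") auto
next
  assume ?blocks
  then consider "s = 0" "z = of_real (q 0)"
    | m where "2 * m + s \<noteq> 0"
        "z = of_real (sym_eig_plus (p m) (q m) (r m)) \<or> z = of_real (sym_eig_minus (p m) (q m) (r m))"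
    by blast
  then obtain m where "if 2 * m + s = 0 then z = of_real (q 0)
      else z = of_real (sym_eig_plus (p m) (q m) (r m)) \<or> z = of_real (sym_eig_minus (p m) (q m) (r m))"
  proof cases
    case 1
    then show thesis using that[of 0] by simp
  next
    case (2 m)
    then show thesis using that[of m] by (simp only: if_False simp_thms)
  qed
  then have "\<exists>x1 x2. block_kernel z m x1 x2" unfolding block_kernel_iff .
  then show "z \<in> eigenvalues_J c1 c2" unfolding eigenvalues_J_iff_block_kernel by - (rule exI[of _ m])
qed

lemma block_eigenvalues_in_eigenvalues_J:
  assumes "2 * m + s \<noteq> 0"
  shows "of_real (sym_eig_plus (p m) (q m) (r m)) \<in> eigenvalues_J c1 c2"
    and "of_real (sym_eig_minus (p m) (q m) (r m)) \<in> eigenvalues_J c1 c2"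
  using assms unfolding eigenvalues_J_iff by blast+

lemma first_diagonal_in_eigenvalues_J: "s = 0 \<Longrightarrow> of_real (q 0) \<in> eigenvalues_J c1 c2"
  by (simp add: eigenvalues_J_iff)

context
  fixes z :: complex and d :: real
  assumes d_pos: "0 < d" and apart: "\<And>\<mu>. \<mu> \<in> eigenvalues_J c1 c2 \<Longrightarrow> d \<le> cmod (\<mu> - z)"
begin

lemma block_lower_bound:
  assumes "2 * m + s = 0 \<Longrightarrow> x1 = 0"
  shows "d\<^sup>2 * ((cmod x1)\<^sup>2 + (cmod x2)\<^sup>2)
    \<le> (cmod ((of_real (p m) - z) * x1 + of_real (r m) * x2))\<^sup>2 + (cmod (of_real (r m) * x1 + (of_real (q m) - z) * x2))\<^sup>2"
proof (cases "2 * m + s = 0")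
  case True
  then have "s = 0" "m = 0" "x1 = 0" using assms by auto
  have "d \<le> cmod (of_real (q 0) - z)" using apart first_diagonal_in_eigenvalues_J \<open>s = 0\<close> by blast
  then have "d\<^sup>2 * (cmod x2)\<^sup>2 \<le> (cmod (of_real (q 0) - z))\<^sup>2 * (cmod x2)\<^sup>2"
    using d_pos by (intro mult_right_mono power_mono) auto
  then show ?thesis using \<open>m = 0\<close> \<open>x1 = 0\<close> coupling_at_origin[OF \<open>s = 0\<close>]
    by (simp add: norm_mult power_mult_distrib)
next
  case False
  then show ?thesis
    using d_pos by (intro sym2_lower_bound apart block_eigenvalues_in_eigenvalues_J) auto
qed

lemma block_solvable:
  assumes "2 * m + s = 0 \<Longrightarrow> g1 = 0"
  shows "\<exists>x1 x2. (2 * m + s = 0 \<longrightarrow> x1 = 0) \<and>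
    (of_real (p m) - z) * x1 + of_real (r m) * x2 = g1 \<and> of_real (r m) * x1 + (of_real (q m) - z) * x2 = g2"
proof (cases "2 * m + s = 0")
  case True
  then have "s = 0" "m = 0" "g1 = 0" using assms by auto
  have "d \<le> cmod (of_real (q 0) - z)" using apart first_diagonal_in_eigenvalues_J \<open>s = 0\<close> by blast
  then have "of_real (q 0) - z \<noteq> 0" using d_pos by auto
  then show ?thesis using \<open>m = 0\<close> \<open>g1 = 0\<close> coupling_at_origin[OF \<open>s = 0\<close>]
    by (intro exI[of _ 0] exI[of _ "g2 / (of_real (q 0) - z)"]) simp
next
  case False
  have "z \<noteq> of_real (sym_eig_plus (p m) (q m) (r m))" "z \<noteq> of_real (sym_eig_minus (p m) (q m) (r m))"
    using apart[OF block_eigenvalues_in_eigenvalues_J(1)[OF False]]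
      apart[OF block_eigenvalues_in_eigenvalues_J(2)[OF False]] d_pos by auto
  then have "(of_real (p m) - z) * (of_real (q m) - z) - (of_real (r m))\<^sup>2 \<noteq> 0"
    unfolding sym_eig_char_poly_eq_0_iff by blast
  from sym2_solvable[OF this] obtain x1 x2 where
    "(of_real (p m) - z) * x1 + of_real (r m) * x2 = g1" "of_real (r m) * x1 + (of_real (q m) - z) * x2 = g2"
    by blast
  with False show ?thesis by (intro exI[of _ x1] exI[of _ x2] conjI) auto
qed

lemma Jop_minus_lower_bound:
  assumes "u \<in> ell2" and "Jop_minus c1 c2 z u \<in> ell2"
  shows "d * l2norm u \<le> l2norm (Jop_minus c1 c2 z u)"
proof -
  have "u 0 = 0" using assms(1) by (simp add: ell2_def)
  have "summable (\<lambda>n. (cmod (u n))\<^sup>2) \<and>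
      d\<^sup>2 * (\<Sum>n. (cmod (u n))\<^sup>2) \<le> (\<Sum>n. (cmod (Jop_minus c1 c2 z u n))\<^sup>2)"
  proof (rule summable_le_by_pairs_from[where s = s])
    fix m
    show "d\<^sup>2 * ((cmod (u (2 * m + s)))\<^sup>2 + (cmod (u (2 * m + s + 1)))\<^sup>2)
        \<le> (cmod (Jop_minus c1 c2 z u (2 * m + s)))\<^sup>2 + (cmod (Jop_minus c1 c2 z u (2 * m + s + 1)))\<^sup>2"
      unfolding Jop_minus_block_fst Jop_minus_block_snd by (rule block_lower_bound) (use \<open>u 0 = 0\<close> in simp)
  qed (use d_pos assms(2) \<open>u 0 = 0\<close> in \<open>auto simp: ell2_def less_offset_iff\<close>)
  then have "sqrt (d\<^sup>2 * (\<Sum>n. (cmod (u n))\<^sup>2)) \<le> sqrt (\<Sum>n. (cmod (Jop_minus c1 c2 z u n))\<^sup>2)"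
    by (simp only: real_sqrt_le_mono)
  then show "d * l2norm u \<le> l2norm (Jop_minus c1 c2 z u)"
    using d_pos unfolding l2norm_def by (simp add: real_sqrt_mult)
qed

lemma Jop_minus_surj:
  assumes f: "f \<in> ell2"
  shows "\<exists>u \<in> domJ c1 c2. Jop_minus c1 c2 z u = f"
proof -
  have "\<forall>m. \<exists>x1 x2. (2 * m + s = 0 \<longrightarrow> x1 = 0) \<and>
      (of_real (p m) - z) * x1 + of_real (r m) * x2 = f (2 * m + s) \<and>
      of_real (r m) * x1 + (of_real (q m) - z) * x2 = f (2 * m + s + 1)"
    using block_solvable f by (auto simp: ell2_def)
  then obtain x1 x2 where x: "\<And>m. (2 * m + s = 0 \<longrightarrow> x1 m = 0) \<and>
      (of_real (p m) - z) * x1 m + of_real (r m) * x2 m = f (2 * m + s) \<and>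
      of_real (r m) * x1 m + (of_real (q m) - z) * x2 m = f (2 * m + s + 1)"
    by metis
  define u where "u n = (if n < s then 0 else if even (n - s) then x1 ((n - s) div 2) else x2 ((n - s) div 2))" for n
  have u_fst: "u (2 * m + s) = x1 m" and u_snd: "u (2 * m + s + 1) = x2 m" for m
    by (simp_all add: u_def)
  have "u 0 = 0" using offset_le_1 x[of 0] u_fst[of 0] by (cases s) (auto simp: u_def)
  have "Jop_minus c1 c2 z u = f"
  proof (rule eq_if_blockwise_eq)
    show "Jop_minus c1 c2 z u 0 = f 0" using \<open>u 0 = 0\<close> f by (simp add: Jop_minus_def ell2_def)
    fix m
    show "Jop_minus c1 c2 z u (2 * m + s) = f (2 * m + s) \<and> Jop_minus c1 c2 z u (2 * m + s + 1) = f (2 * m + s + 1)"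
      unfolding Jop_minus_block_fst Jop_minus_block_snd u_fst u_snd using x[of m] by blast
  qed
  have "summable (\<lambda>n. (cmod (u n))\<^sup>2)"
  proof (rule conjunct1[OF summable_le_by_pairs_from[where s = s and K = "d\<^sup>2"]])
    fix m
    show "d\<^sup>2 * ((cmod (u (2 * m + s)))\<^sup>2 + (cmod (u (2 * m + s + 1)))\<^sup>2)
        \<le> (cmod (f (2 * m + s)))\<^sup>2 + (cmod (f (2 * m + s + 1)))\<^sup>2"
      unfolding u_fst u_snd using block_lower_bound[of m "x1 m" "x2 m"] x[of m] by auto
  qed (use d_pos f \<open>u 0 = 0\<close> in \<open>auto simp: ell2_def less_offset_iff\<close>)
  then have "u \<in> ell2" using \<open>u 0 = 0\<close> by (simp add: ell2_def)
  moreover have "Jop c1 c2 u = (\<lambda>n. f n + z * u n)"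
    using \<open>Jop_minus c1 c2 z u = f\<close> by (simp add: Jop_minus_def fun_eq_iff diff_eq_eq)
  ultimately have "u \<in> domJ c1 c2" using ell2_add_scaled[OF f] by (simp add: domJ_def)
  then show ?thesis using \<open>Jop_minus c1 c2 z u = f\<close> by blast
qed

lemma in_resolvent_set_J: "z \<in> resolvent_set_J c1 c2"
proof -
  have bound: "l2norm u \<le> (1 / d) * l2norm (Jop_minus c1 c2 z u)" if "u \<in> domJ c1 c2" for u
    using Jop_minus_lower_bound[of u] that d_pos Jop_minus_in_ell2[OF that]
    by (simp add: domJ_def field_simps)
  have "inj_on (Jop_minus c1 c2 z) (domJ c1 c2)"
  proof (rule inj_onI)
    fix u v assume u: "u \<in> domJ c1 c2" and v: "v \<in> domJ c1 c2"
      and eq: "Jop_minus c1 c2 z u = Jop_minus c1 c2 z v"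
    have "(\<lambda>n. Jop c1 c2 u n - Jop c1 c2 v n) \<in> ell2"
      using u v ell2_add_scaled[of "Jop c1 c2 u" "Jop c1 c2 v" "- 1"] by (simp add: domJ_def)
    then have w: "(\<lambda>n. u n - v n) \<in> domJ c1 c2"
      using u v ell2_add_scaled[of u v "- 1"] by (simp add: domJ_def Jop_diff)
    have "Jop_minus c1 c2 z (\<lambda>n. u n - v n) = (\<lambda>_. 0)" using eq by (simp add: Jop_minus_diff)
    then have "l2norm (\<lambda>n. u n - v n) \<le> 0" using bound[OF w] by (simp add: l2norm_def)
    then show "u = v" using l2norm_pos[of "\<lambda>n. u n - v n"] w by (force simp: domJ_def fun_eq_iff)
  qed
  moreover have "Jop_minus c1 c2 z ` domJ c1 c2 = ell2"
    using Jop_minus_in_ell2 Jop_minus_surj by blast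
  ultimately show ?thesis unfolding resolvent_set_J_iff bij_betw_def using bound by blast
qed

end

lemma spectrum_J_eq_closure: "spectrum_J c1 c2 = closure (eigenvalues_J c1 c2)"
proof -
  have "z \<in> resolvent_set_J c1 c2 \<longleftrightarrow> (\<exists>d>0. \<forall>\<mu> \<in> eigenvalues_J c1 c2. d \<le> cmod (\<mu> - z))" for z
    using resolvent_set_J_apart_from_eigenvalues in_resolvent_set_J by blast
  moreover have "z \<in> closure (eigenvalues_J c1 c2) \<longleftrightarrow> \<not> (\<exists>d>0. \<forall>\<mu> \<in> eigenvalues_J c1 c2. d \<le> cmod (\<mu> - z))" for z
    unfolding closure_approachable dist_norm by (meson not_le)
  ultimately show ?thesis unfolding spectrum_J_def by blast
qed

end

section \<open>The two block structures\<close>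

lemma block_diagonal_J_c2_0:
  assumes "c2 = 0"
  shows "block_diagonal_J c1 c2 1 (\<lambda>m. 2 * real m + 1) (\<lambda>m. 2 * real m + 2) (\<lambda>m. c1 * (2 * real m + 1))"
  by unfold_locales (use assms in \<open>simp_all add: Jop_def offdiag_def cseq_def add_ac\<close>)

lemma block_diagonal_J_c1_0:
  assumes "c1 = 0"
  shows "block_diagonal_J c1 c2 0 (\<lambda>m. 2 * real m) (\<lambda>m. 2 * real m + 1) (\<lambda>m. c2 * (2 * real m))"
proof unfold_locales
  fix u :: "nat \<Rightarrow> complex" and m :: nat
  show "Jop c1 c2 u (2 * m + 0) = of_real (2 * real m) * u (2 * m + 0) + of_real (c2 * (2 * real m)) * u (2 * m + 0 + 1)"
    using assms by (cases m) (simp_all add: Jop_def offdiag_def cseq_def)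
  show "Jop c1 c2 u (2 * m + 0 + 1) = of_real (c2 * (2 * real m)) * u (2 * m + 0) + of_real (2 * real m + 1) * u (2 * m + 0 + 1)"
    using assms by (simp add: Jop_def offdiag_def cseq_def add_ac)
qed simp

lemma sym_eig_c2_0_blocks:
  "sym_eig_plus (2 * real m + 1) (2 * real m + 2) (c * (2 * real m + 1)) = lam_plus \<bar>c\<bar> (Suc m)"
  "sym_eig_minus (2 * real m + 1) (2 * real m + 2) (c * (2 * real m + 1)) = lam_minus \<bar>c\<bar> (Suc m)"
proof -
  have "(2 * real m + 1 - (2 * real m + 2))\<^sup>2 + 4 * (c * (2 * real m + 1))\<^sup>2 = 4 * \<bar>c\<bar>\<^sup>2 * (2 * real (Suc m) - 1)\<^sup>2 + 1"
    by (simp add: power2_eq_square algebra_simps)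
  then show "sym_eig_plus (2 * real m + 1) (2 * real m + 2) (c * (2 * real m + 1)) = lam_plus \<bar>c\<bar> (Suc m)"
    and "sym_eig_minus (2 * real m + 1) (2 * real m + 2) (c * (2 * real m + 1)) = lam_minus \<bar>c\<bar> (Suc m)"
    unfolding sym_eig_plus_def sym_eig_minus_def lam_plus_def lam_minus_def by (simp_all add: algebra_simps)
qed

lemma sym_eig_c1_0_blocks:
  "sym_eig_plus (2 * real m) (2 * real m + 1) (c * (2 * real m)) = tlam_plus \<bar>c\<bar> (Suc m)"
  "sym_eig_minus (2 * real m) (2 * real m + 1) (c * (2 * real m)) = tlam_minus \<bar>c\<bar> (Suc m)"
proof -
  have "(2 * real m - (2 * real m + 1))\<^sup>2 + 4 * (c * (2 * real m))\<^sup>2 = 4 * \<bar>c\<bar>\<^sup>2 * (2 * real (Suc m) - 2)\<^sup>2 + 1"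
    by (simp add: power2_eq_square algebra_simps)
  then show "sym_eig_plus (2 * real m) (2 * real m + 1) (c * (2 * real m)) = tlam_plus \<bar>c\<bar> (Suc m)"
    and "sym_eig_minus (2 * real m) (2 * real m + 1) (c * (2 * real m)) = tlam_minus \<bar>c\<bar> (Suc m)"
    unfolding sym_eig_plus_def sym_eig_minus_def tlam_plus_def tlam_minus_def by (simp_all add: algebra_simps)
qed

lemma ex_Suc_ge_iff: "(\<exists>m \<ge> k. P (Suc m)) \<longleftrightarrow> (\<exists>n \<ge> Suc k. P n)"
proof
  assume "\<exists>n \<ge> Suc k. P n"
  then obtain m where "k \<le> m" "P (Suc m)" by (metis Suc_le_D Suc_le_mono)
  then show "\<exists>m \<ge> k. P (Suc m)" by blast
qed (use Suc_le_mono in blast)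

lemma eigenvalues_J_c2_0:
  assumes "c2 = 0"
  shows "eigenvalues_J c1 c2 =
    {complex_of_real (lam_plus \<bar>c1\<bar> n) | n. n \<ge> 1} \<union> {complex_of_real (lam_minus \<bar>c1\<bar> n) | n. n \<ge> 1}"
proof -
  interpret block_diagonal_J c1 c2 1 "\<lambda>m. 2 * real m + 1" "\<lambda>m. 2 * real m + 2" "\<lambda>m. c1 * (2 * real m + 1)"
    using assms by (rule block_diagonal_J_c2_0)
  show ?thesis
  proof (rule set_eqI)
    fix z :: complex
    define Q where "Q n \<longleftrightarrow> z = of_real (lam_plus \<bar>c1\<bar> n) \<or> z = of_real (lam_minus \<bar>c1\<bar> n)" for n
    have "z \<in> eigenvalues_J c1 c2 \<longleftrightarrow> (\<exists>m \<ge> 0. Q (Suc m))"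
      by (simp add: eigenvalues_J_iff sym_eig_c2_0_blocks Q_def)
    also have "\<dots> \<longleftrightarrow> (\<exists>n \<ge> Suc 0. Q n)" by (rule ex_Suc_ge_iff)
    finally show "z \<in> eigenvalues_J c1 c2 \<longleftrightarrow>
        z \<in> {complex_of_real (lam_plus \<bar>c1\<bar> n) | n. n \<ge> 1} \<union> {complex_of_real (lam_minus \<bar>c1\<bar> n) | n. n \<ge> 1}"
      by (auto simp: Q_def)
  qed
qed

lemma eigenvalues_J_c1_0:
  assumes "c1 = 0"
  shows "eigenvalues_J c1 c2 = {1} \<union>
    {complex_of_real (tlam_plus \<bar>c2\<bar> n) | n. n \<ge> 2} \<union> {complex_of_real (tlam_minus \<bar>c2\<bar> n) | n. n \<ge> 2}"
proof -
  interpret block_diagonal_J c1 c2 0 "\<lambda>m. 2 * real m" "\<lambda>m. 2 * real m + 1" "\<lambda>m. c2 * (2 * real m)"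
    using assms by (rule block_diagonal_J_c1_0)
  show ?thesis
  proof (rule set_eqI)
    fix z :: complex
    define Q where "Q n \<longleftrightarrow> z = of_real (tlam_plus \<bar>c2\<bar> n) \<or> z = of_real (tlam_minus \<bar>c2\<bar> n)" for n
    have "z \<in> eigenvalues_J c1 c2 \<longleftrightarrow> z = 1 \<or> (\<exists>m \<ge> 1. Q (Suc m))"
      by (simp add: eigenvalues_J_iff sym_eig_c1_0_blocks Q_def Suc_le_eq)
    also have "\<dots> \<longleftrightarrow> z = 1 \<or> (\<exists>n \<ge> Suc 1. Q n)" by (simp only: ex_Suc_ge_iff)
    finally show "z \<in> eigenvalues_J c1 c2 \<longleftrightarrow> z \<in> {1} \<union>
        {complex_of_real (tlam_plus \<bar>c2\<bar> n) | n. n \<ge> 2} \<union> {complex_of_real (tlam_minus \<bar>c2\<bar> n) | n. n \<ge> 2}"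
      by (auto simp: Q_def numeral_2_eq_2)
  qed
qed

lemma spectrum_J_eq_closure_eigenvalues_J:
  assumes "c1 * c2 = 0"
  shows "spectrum_J c1 c2 = closure (eigenvalues_J c1 c2)"
proof -
  consider "c2 = 0" | "c1 = 0" using assms by auto
  then show ?thesis
  proof cases
    case 1
    interpret block_diagonal_J c1 c2 1 "\<lambda>m. 2 * real m + 1" "\<lambda>m. 2 * real m + 2" "\<lambda>m. c1 * (2 * real m + 1)"
      using 1 by (rule block_diagonal_J_c2_0)
    show ?thesis by (rule spectrum_J_eq_closure)
  next
    case 2
    interpret block_diagonal_J c1 c2 0 "\<lambda>m. 2 * real m" "\<lambda>m. 2 * real m + 1" "\<lambda>m. c2 * (2 * real m)"
      using 2 by (rule block_diagonal_J_c1_0)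
    show ?thesis by (rule spectrum_J_eq_closure)
  qed
qed

section \<open>Asymptotics of the eigenvalues\<close>

lemma sqrt_sq_plus_one_bounds:
  fixes X :: real assumes "0 \<le> X"
  shows "X \<le> sqrt (X\<^sup>2 + 1)" and "sqrt (X\<^sup>2 + 1) \<le> X + 1"
proof -
  show "X \<le> sqrt (X\<^sup>2 + 1)" by (rule real_le_rsqrt) simp
  have "sqrt (X\<^sup>2 + 1) \<le> sqrt ((X + 1)\<^sup>2)"
    using assms by (intro real_sqrt_le_mono) (simp add: power2_eq_square algebra_simps)
  then show "sqrt (X\<^sup>2 + 1) \<le> X + 1" using assms by simp
qed

lemma sqrt_sq_plus_one_gap_bigo_1:
  fixes c b K :: real
  assumes "0 < c" and "0 \<le> b" and "b \<le> 4 * c"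
  shows "(\<lambda>n::nat. (sqrt ((4 * c * real n - b)\<^sup>2 + 1) - (4 * c * real n - b)) / 2 + K) \<in> O(\<lambda>n. 1)"
proof (rule bigoI[where c = "1/2 + \<bar>K\<bar>"], rule eventually_sequentiallyI[of 1])
  fix n :: nat assume "1 \<le> n"
  define X where "X = 4 * c * real n - b"
  have "4 * c * 1 \<le> 4 * c * real n" using assms \<open>1 \<le> n\<close> by (intro mult_left_mono) auto
  then have "0 \<le> X" unfolding X_def using assms by linarith
  then have "\<bar>(sqrt (X\<^sup>2 + 1) - X) / 2\<bar> \<le> 1/2" using sqrt_sq_plus_one_bounds[of X] by simp
  then have "\<bar>(sqrt (X\<^sup>2 + 1) - X) / 2 + K\<bar> \<le> 1/2 + \<bar>K\<bar>"
    using abs_triangle_ineq[of "(sqrt (X\<^sup>2 + 1) - X) / 2" K] by linarith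
  then show "norm ((sqrt ((4 * c * real n - b)\<^sup>2 + 1) - (4 * c * real n - b)) / 2 + K) \<le> (1/2 + \<bar>K\<bar>) * norm (1::real)"
    unfolding X_def by simp
qed

text \<open>With \<open>X = 4cx - b\<close> and \<open>S = \<surd>(X\<^sup>2 + 1)\<close>, \<open>X - S = -1/(S + X)\<close>, and the error term equals
  \<open>(2(S - X) - 4b) / (32cx(S + X))\<close>, whose numerator is bounded and denominator is \<open>\<ge> 128c\<^sup>2x\<^sup>2\<close>.\<close>

lemma sqrt_sq_plus_one_expansion_estimate:
  fixes c b x :: real
  assumes c: "0 < c" and b: "0 \<le> b" and x: "1 \<le> x" and large: "b \<le> 2 * c * x"
  shows "\<bar>((4 * c * x - b) - sqrt ((4 * c * x - b)\<^sup>2 + 1)) / 2 + 1 / (16 * c * x)\<bar>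
    \<le> (2 + 4 * b) / (128 * c\<^sup>2) * (1 / x\<^sup>2)"
proof -
  define X where "X = 4 * c * x - b"
  define S where "S = sqrt (X\<^sup>2 + 1)"
  have "0 < c * x" using c x by simp
  have "2 * c * x \<le> X" using large by (simp add: X_def)
  then have "0 \<le> X" using \<open>0 < c * x\<close> by linarith
  have S: "X \<le> S" "S \<le> X + 1" unfolding S_def using sqrt_sq_plus_one_bounds[OF \<open>0 \<le> X\<close>] by auto
  have "4 * c * x \<le> S + X" using S \<open>2 * c * x \<le> X\<close> by linarith
  then have "0 < S + X" using \<open>0 < c * x\<close> by linarith
  have "S\<^sup>2 = X\<^sup>2 + 1" unfolding S_def by simp
  then have "(X - S) * (S + X) = -1" by (simp add: power2_eq_square algebra_simps)
  then have "X - S = - 1 / (S + X)" using \<open>0 < S + X\<close> by (simp add: field_simps)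
  then have "(X - S) / 2 + 1 / (16 * c * x) = - 1 / (2 * (S + X)) + 1 / (16 * c * x)" by simp
  also have "\<dots> = (2 * (S + X) - 16 * c * x) / (32 * c * x * (S + X))"
    using \<open>0 < S + X\<close> c x by (simp add: field_simps)
  also have "2 * (S + X) - 16 * c * x = 2 * (S - X) - 4 * b" by (simp add: X_def)
  finally have "\<bar>(X - S) / 2 + 1 / (16 * c * x)\<bar> = \<bar>2 * (S - X) - 4 * b\<bar> / (32 * c * x * (S + X))"
    using \<open>0 < S + X\<close> \<open>0 < c * x\<close> by (simp add: abs_divide)
  also have "\<dots> \<le> (2 + 4 * b) / (128 * c\<^sup>2 * x\<^sup>2)"
  proof (rule frac_le)
    show "\<bar>2 * (S - X) - 4 * b\<bar> \<le> 2 + 4 * b" using S b by (intro abs_leI) simp_all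
    have "32 * c * x * (4 * c * x) \<le> 32 * c * x * (S + X)"
      using \<open>4 * c * x \<le> S + X\<close> \<open>0 < c * x\<close> by (intro mult_left_mono) auto
    then show "128 * c\<^sup>2 * x\<^sup>2 \<le> 32 * c * x * (S + X)" by (simp add: power2_eq_square algebra_simps)
  qed (use b c x in simp_all)
  finally show ?thesis unfolding X_def S_def by simp
qed

lemma sqrt_sq_plus_one_expansion_bigo:
  fixes c b :: real
  assumes c: "0 < c" and b: "0 \<le> b"
  shows "(\<lambda>n::nat. ((4 * c * real n - b) - sqrt ((4 * c * real n - b)\<^sup>2 + 1)) / 2 + 1 / (16 * c * real n))
     \<in> O(\<lambda>n. 1 / (real n)\<^sup>2)"
proof (rule bigoI[where c = "(2 + 4 * b) / (128 * c\<^sup>2)"])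
  obtain N :: nat where N: "b / (2 * c) + 1 \<le> real N" by (meson real_arch_simple)
  show "\<forall>\<^sub>F n in sequentially. norm (((4 * c * real n - b) - sqrt ((4 * c * real n - b)\<^sup>2 + 1)) / 2 + 1 / (16 * c * real n))
        \<le> (2 + 4 * b) / (128 * c\<^sup>2) * norm (1 / (real n)\<^sup>2)"
  proof (rule eventually_sequentiallyI[of N])
    fix n assume "N \<le> n"
    then have n: "b / (2 * c) + 1 \<le> real n" using N by linarith
    then have "1 \<le> real n" using b c by (smt (verit) divide_nonneg_pos)
    have "b \<le> 2 * c * real n" using n c by (simp add: field_simps)
    then show "norm (((4 * c * real n - b) - sqrt ((4 * c * real n - b)\<^sup>2 + 1)) / 2 + 1 / (16 * c * real n))
        \<le> (2 + 4 * b) / (128 * c\<^sup>2) * norm (1 / (real n)\<^sup>2)"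
      using sqrt_sq_plus_one_expansion_estimate[OF c b \<open>1 \<le> real n\<close>] by simp
  qed
qed

lemma lam_asymptotics:
  fixes c :: real assumes c: "0 < c"
  shows "(\<lambda>n. lam_plus c n - 2 * (1 + c) * real n) \<in> O(\<lambda>n. 1)"
    and "(\<lambda>n. lam_minus c n - (2 * (1 - c) * real n + (c - 1/2) - 1 / (16 * c * real n)))
       \<in> O(\<lambda>n. 1 / (real n)\<^sup>2)"
proof -
  have root: "4 * c\<^sup>2 * (2 * real n - 1)\<^sup>2 = (4 * c * real n - 2 * c)\<^sup>2" for n :: nat
  proof -
    have "4 * c * real n - 2 * c = (2 * c) * (2 * real n - 1)" by (simp add: algebra_simps)
    then show ?thesis by (simp add: power_mult_distrib)
  qed
  have "(\<lambda>n. lam_plus c n - 2 * (1 + c) * real n) =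
      (\<lambda>n. (sqrt ((4 * c * real n - 2 * c)\<^sup>2 + 1) - (4 * c * real n - 2 * c)) / 2 + (- c - 1/2))"
    unfolding lam_plus_def root by (simp add: fun_eq_iff field_simps)
  then show "(\<lambda>n. lam_plus c n - 2 * (1 + c) * real n) \<in> O(\<lambda>n. 1)"
    using sqrt_sq_plus_one_gap_bigo_1[of c "2 * c"] c by simp
  have "(\<lambda>n. lam_minus c n - (2 * (1 - c) * real n + (c - 1/2) - 1 / (16 * c * real n))) =
      (\<lambda>n. ((4 * c * real n - 2 * c) - sqrt ((4 * c * real n - 2 * c)\<^sup>2 + 1)) / 2 + 1 / (16 * c * real n))"
    unfolding lam_minus_def root by (simp add: fun_eq_iff field_simps)
  then show "(\<lambda>n. lam_minus c n - (2 * (1 - c) * real n + (c - 1/2) - 1 / (16 * c * real n)))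
      \<in> O(\<lambda>n. 1 / (real n)\<^sup>2)"
    using sqrt_sq_plus_one_expansion_bigo[of c "2 * c"] c by simp
qed

lemma tlam_asymptotics:
  fixes c :: real assumes c: "0 < c"
  shows "(\<lambda>n. tlam_plus c n - 2 * (1 + c) * real n) \<in> O(\<lambda>n. 1)"
    and "(\<lambda>n. tlam_minus c n - (2 * (1 - c) * real n + (2 * c - 3/2) - 1 / (16 * c * real n)))
       \<in> O(\<lambda>n. 1 / (real n)\<^sup>2)"
proof -
  have root: "4 * c\<^sup>2 * (2 * real n - 2)\<^sup>2 = (4 * c * real n - 4 * c)\<^sup>2" for n :: nat
  proof -
    have "4 * c * real n - 4 * c = (2 * c) * (2 * real n - 2)" by (simp add: algebra_simps)
    then show ?thesis by (simp add: power_mult_distrib)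
  qed
  have "(\<lambda>n. tlam_plus c n - 2 * (1 + c) * real n) =
      (\<lambda>n. (sqrt ((4 * c * real n - 4 * c)\<^sup>2 + 1) - (4 * c * real n - 4 * c)) / 2 + (- 2 * c - 3/2))"
    unfolding tlam_plus_def root by (simp add: fun_eq_iff field_simps)
  then show "(\<lambda>n. tlam_plus c n - 2 * (1 + c) * real n) \<in> O(\<lambda>n. 1)"
    using sqrt_sq_plus_one_gap_bigo_1[of c "4 * c"] c by simp
  have "(\<lambda>n. tlam_minus c n - (2 * (1 - c) * real n + (2 * c - 3/2) - 1 / (16 * c * real n))) =
      (\<lambda>n. ((4 * c * real n - 4 * c) - sqrt ((4 * c * real n - 4 * c)\<^sup>2 + 1)) / 2 + 1 / (16 * c * real n))"
    unfolding tlam_minus_def root by (simp add: fun_eq_iff field_simps)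
  then show "(\<lambda>n. tlam_minus c n - (2 * (1 - c) * real n + (2 * c - 3/2) - 1 / (16 * c * real n)))
      \<in> O(\<lambda>n. 1 / (real n)\<^sup>2)"
    using sqrt_sq_plus_one_expansion_bigo[of c "4 * c"] c by simp
qed

theorem theorem5:
  fixes c1 c2 :: real
  assumes "c1 * c2 = 0" and "max \<bar>c1\<bar> \<bar>c2\<bar> \<noteq> 0"
  shows "let c = max \<bar>c1\<bar> \<bar>c2\<bar> in
    spectrum_J c1 c2 = closure (eigenvalues_J c1 c2) \<and>
    (c1 \<noteq> 0 \<and> c2 = 0 \<longrightarrow>
       eigenvalues_J c1 c2 =
         {complex_of_real (lam_plus c n) | n. n \<ge> 1} \<union> {complex_of_real (lam_minus c n) | n. n \<ge> 1}) \<and>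
    (c1 = 0 \<and> c2 \<noteq> 0 \<longrightarrow>
       eigenvalues_J c1 c2 = {1} \<union>
         {complex_of_real (tlam_plus c n) | n. n \<ge> 2} \<union> {complex_of_real (tlam_minus c n) | n. n \<ge> 2}) \<and>
    (\<lambda>n. lam_plus c n - 2 * (1 + c) * real n) \<in> O(\<lambda>n. 1) \<and>
    (\<lambda>n. tlam_plus c n - 2 * (1 + c) * real n) \<in> O(\<lambda>n. 1) \<and>
    (\<lambda>n. lam_minus c n - (2 * (1 - c) * real n + (c - 1/2) - 1 / (16 * c * real n)))
       \<in> O(\<lambda>n. 1 / (real n)\<^sup>2) \<and>
    (\<lambda>n. tlam_minus c n - (2 * (1 - c) * real n + (2 * c - 3/2) - 1 / (16 * c * real n)))
       \<in> O(\<lambda>n. 1 / (real n)\<^sup>2)"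
proof -
  define c where "c = max \<bar>c1\<bar> \<bar>c2\<bar>"
  have "0 \<le> c" by (simp add: c_def le_max_iff_disj)
  then have "0 < c" using assms(2) c_def by simp
  have "c2 = 0 \<Longrightarrow> c = \<bar>c1\<bar>" and "c1 = 0 \<Longrightarrow> c = \<bar>c2\<bar>" by (simp_all add: c_def)
  then have "c1 \<noteq> 0 \<and> c2 = 0 \<longrightarrow> eigenvalues_J c1 c2 =
      {complex_of_real (lam_plus c n) | n. n \<ge> 1} \<union> {complex_of_real (lam_minus c n) | n. n \<ge> 1}"
    and "c1 = 0 \<and> c2 \<noteq> 0 \<longrightarrow> eigenvalues_J c1 c2 = {1} \<union>
      {complex_of_real (tlam_plus c n) | n. n \<ge> 2} \<union> {complex_of_real (tlam_minus c n) | n. n \<ge> 2}"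
    using eigenvalues_J_c2_0 eigenvalues_J_c1_0 by simp_all
  then show ?thesis
    unfolding Let_def c_def[symmetric]
    using spectrum_J_eq_closure_eigenvalues_J[OF assms(1)] lam_asymptotics[OF \<open>0 < c\<close>]
      tlam_asymptotics[OF \<open>0 < c\<close>] by blast
qed

end
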